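(* Under Assumption 1, if for every $k\in N$ the polyhedral set $S_k$ is empty, then the convex relaxation (R) and the Shor relaxation (S) are exact, i.e. $p^\star=v^\star=c^\star$.
   Context: Let $N=\{1,\dots,n\}$ and $M=\{1,\dots,m\}$. Let ${\bf D}$ and ${\bf A}^i$ ($i\in M$) be real diagonal $n\times n$ matrices, ${\bf c},{\bf a}_i\in\mathbb{R}^n$ ($a_{ij}$ denotes the $j$-th entry of ${\bf a}_i$) and $b_i\in\mathbb{R}$. The diagonal QCQP is (P): $c^\star=\inf\{{\bf x}^\top{\bf D}{\bf x}+2{\bf c}^\top{\bf x} : {\bf x}^\top{\bf A}^i{\bf x}+2{\bf a}_i^\top{\bf x}\le b_i,\ i\in M\}$. Its Shor relaxation is (S): $v^\star=\inf\{{\bf D}\bullet{\bf X}+2{\bf c}^\top{\bf x} : {\bf A}^i\bullet{\bf X}+2{\bf a}_i^\top{\bf x}\le b_i\ (i\in M),\ {\bf X}-{\bf x}{\bf x}^\top\succeq {\bf O}\}$, where ${\bf P}\bullet{\bf Q}=\mathrm{trace}({\bf P}{\bf Q})$. The convex relaxation is (R): $p^\star=\inf\{\sum_{j\in N}D_{jj}z_j+2\sum_{j\in N}c_jx_j : \sum_{j\in N}A^i_{jj}z_j+2\sum_{j\in N}a_{ij}x_j\le b_i\ (i\in M),\ x_j^2\le z_j\ (j\in N)\}$. Assumption 1: (i) the feasible region of (P) is nonempty; (ii) there exists $\bar{\bf y}\in\mathbb{R}^m$, $\bar{\bf y}\ge 0$, with $\sum_{i\in M}\bar y_i{\bf A}^i\succ{\bf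 O}$; (iii) the feasible region of (S) has nonempty interior. For $k\in N$, $S_k$ is the set of $\boldsymbol{\mu}\in\mathbb{R}^m$ satisfying: $D_{kk}+\sum_{i\in M}\mu_iA^i_{kk}=0$; $c_k+\sum_{i\in M}\mu_ia_{ik}=0$; $D_{jj}+\sum_{i\in M}\mu_iA^i_{jj}\ge 0$ for all $j\in N$, $j\ne k$; $\mu_i\ge 0$ for all $i\in M$. *)

theory Defs
  imports "HOL-Analysis.Analysis"
begin

text \<open>Diagonal QCQP. Index sets N and M are the finite types 'n and 'm.
  Matrices are real^'n^'n; A i is the matrix A^i; a i is the vector a_i.\<close>

definition diag_mat :: "real^'n^'n \<Rightarrow> bool" where
  "diag_mat P \<longleftrightarrow> (\<forall>i j. i \<noteq> j \<longrightarrow> P $ i $ j = 0)"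

definition mat_bullet :: "real^'n^'n \<Rightarrow> real^'n^'n \<Rightarrow> real" where
  "mat_bullet P Q = trace (P ** Q)"

definition outer :: "real^'n \<Rightarrow> real^'n^'n" where
  "outer x = (\<chi> i j. x $ i * x $ j)"

definition symmetric_mat :: "real^'n^'n \<Rightarrow> bool" where
  "symmetric_mat P \<longleftrightarrow> transpose P = P"

definition psd :: "real^'n^'n \<Rightarrow> bool" where
  "psd P \<longleftrightarrow> symmetric_mat P \<and> (\<forall>v. v \<bullet> (P *v v) \<ge> 0)"

definition pd :: "real^'n^'n \<Rightarrow> bool" where
  "pd P \<longleftrightarrow> symmetric_mat P \<and> (\<forall>v. v \<noteq> 0 \<longrightarrow> v \<bullet> (P *v v) > 0)"

definition feasP :: "('m \<Rightarrow> real^'n^'n) \<Rightarrow> ('m \<Rightarrow> real^'n) \<Rightarrow> ('m \<Rightarrow> real) \<Rightarrow> (real^'n) set" where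
  "feasP A a b = {x. \<forall>i. x \<bullet> (A i *v x) + 2 * (a i \<bullet> x) \<le> b i}"

definition c_star :: "real^'n^'n \<Rightarrow> real^'n \<Rightarrow> ('m \<Rightarrow> real^'n^'n) \<Rightarrow> ('m \<Rightarrow> real^'n) \<Rightarrow> ('m \<Rightarrow> real) \<Rightarrow> ereal" where
  "c_star D c A a b = (INF x\<in>feasP A a b. ereal (x \<bullet> (D *v x) + 2 * (c \<bullet> x)))"

definition feasS :: "('m \<Rightarrow> real^'n^'n) \<Rightarrow> ('m \<Rightarrow> real^'n) \<Rightarrow> ('m \<Rightarrow> real) \<Rightarrow> ((real^'n) \<times> (real^'n^'n)) set" where
  "feasS A a b = {(x, X). symmetric_mat X \<and>
      (\<forall>i. mat_bullet (A i) X + 2 * (a i \<bullet> x) \<le> b i) \<and> psd (X - outer x)}"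

definition v_star :: "real^'n^'n \<Rightarrow> real^'n \<Rightarrow> ('m \<Rightarrow> real^'n^'n) \<Rightarrow> ('m \<Rightarrow> real^'n) \<Rightarrow> ('m \<Rightarrow> real) \<Rightarrow> ereal" where
  "v_star D c A a b = (INF p\<in>feasS A a b. ereal (mat_bullet D (snd p) + 2 * (c \<bullet> fst p)))"

text \<open>Nonempty interior of the feasible region of (S), taken in the space
  R^n \<times> S^n (symmetric matrices).\<close>
definition feasS_has_interior :: "('m \<Rightarrow> real^'n^'n) \<Rightarrow> ('m \<Rightarrow> real^'n) \<Rightarrow> ('m \<Rightarrow> real) \<Rightarrow> bool" where
  "feasS_has_interior A a b \<longleftrightarrow> (\<exists>x0 X0 e. e > 0 \<and> symmetric_mat X0 \<and>
      (\<forall>x X. symmetric_mat X \<and> dist x x0 < e \<and> dist X X0 < e \<longrightarrow> (x, X) \<in> feasS A a b))"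

definition feasR :: "('m \<Rightarrow> real^'n^'n) \<Rightarrow> ('m \<Rightarrow> real^'n) \<Rightarrow> ('m \<Rightarrow> real) \<Rightarrow> ((real^'n) \<times> (real^'n)) set" where
  "feasR A a b = {(x, z). (\<forall>i. (\<Sum>j\<in>UNIV. A i $ j $ j * z $ j) + 2 * (\<Sum>j\<in>UNIV. a i $ j * x $ j) \<le> b i)
      \<and> (\<forall>j. (x $ j)\<^sup>2 \<le> z $ j)}"

definition p_star :: "real^'n^'n \<Rightarrow> real^'n \<Rightarrow> ('m \<Rightarrow> real^'n^'n) \<Rightarrow> ('m \<Rightarrow> real^'n) \<Rightarrow> ('m \<Rightarrow> real) \<Rightarrow> ereal" where
  "p_star D c A a b = (INF p\<in>feasR A a b.
      ereal ((\<Sum>j\<in>UNIV. D $ j $ j * snd p $ j) + 2 * (\<Sum>j\<in>UNIV. c $ j * fst p $ j)))"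

definition S_set :: "real^'n^'n \<Rightarrow> real^'n \<Rightarrow> ('m \<Rightarrow> real^'n^'n) \<Rightarrow> ('m \<Rightarrow> real^'n) \<Rightarrow> 'n \<Rightarrow> ('m \<Rightarrow> real) set" where
  "S_set D c A a k = {\<mu>.
      D $ k $ k + (\<Sum>i\<in>UNIV. \<mu> i * A i $ k $ k) = 0 \<and>
      c $ k + (\<Sum>i\<in>UNIV. \<mu> i * a i $ k) = 0 \<and>
      (\<forall>j. j \<noteq> k \<longrightarrow> D $ j $ j + (\<Sum>i\<in>UNIV. \<mu> i * A i $ j $ j) \<ge> 0) \<and>
      (\<forall>i. \<mu> i \<ge> 0)}"

end

theory Submission
  imports Defs
begin

text \<open>Writing \<open>z\<^sub>j\<close> for \<open>x\<^sub>j\<^sup>2\<close>, the diagonal QCQP becomes a linear program in \<open>(x, z)\<close>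
  plus the constraints \<open>x\<^sub>j\<^sup>2 \<le> z\<^sub>j\<close> relaxed from equalities; this is (R), and the diagonal of a
  Shor-feasible \<open>X\<close> is (R)-feasible, so \<open>p\<^sup>\<star> \<le> v\<^sup>\<star> \<le> c\<^sup>\<star>\<close>. Assumption 1(ii) makes the feasible
  region of (R) compact, so (R) has a minimiser, and 1(iii) yields a Slater point, so the
  minimiser carries Lagrange multipliers \<open>\<mu> \<ge> 0\<close> for the constraints and \<open>\<sigma> \<ge> 0\<close> for
  \<open>x\<^sub>j\<^sup>2 \<le> z\<^sub>j\<close>. The Lagrangian is bounded below and affine in \<open>z\<close>, forcing
  \<open>D\<^sub>j\<^sub>j + \<Sum>\<^sub>i \<mu>\<^sub>i A\<^sup>i\<^sub>j\<^sub>j = \<sigma>\<^sub>j\<close>; if \<open>\<sigma>\<^sub>k = 0\<close> it is also affine in \<open>x\<^sub>k\<close>, forcing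
  \<open>c\<^sub>k + \<Sum>\<^sub>i \<mu>\<^sub>i a\<^sub>i\<^sub>k = 0\<close>, i.e. \<open>\<mu> \<in> S\<^sub>k\<close>. As all \<open>S\<^sub>k\<close> are empty, \<open>\<sigma> > 0\<close>, and complementary
  slackness gives \<open>z\<^sub>j = x\<^sub>j\<^sup>2\<close> at the minimiser, which is then feasible for (P) with the
  same value.\<close>

section \<open>Diagonal matrices\<close>

lemma matrix_vector_mult_diag:
  "diag_mat P \<Longrightarrow> (P *v x) $ j = P $ j $ j * x $ j"
  by (simp add: matrix_vector_mult_def diag_mat_def sum.remove[of UNIV j])

lemma quad_form_diag:
  "diag_mat P \<Longrightarrow> x \<bullet> (P *v x) = (\<Sum>j\<in>UNIV. P $ j $ j * (x $ j)\<^sup>2)"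
  by (simp add: inner_vec_def matrix_vector_mult_diag power2_eq_square mult_ac)

lemma matrix_matrix_mult_diag:
  "diag_mat P \<Longrightarrow> (P ** X) $ j $ j = P $ j $ j * X $ j $ j"
  by (simp add: matrix_matrix_mult_def diag_mat_def sum.remove[of UNIV j])

lemma mat_bullet_diag:
  "diag_mat P \<Longrightarrow> mat_bullet P X = (\<Sum>j\<in>UNIV. P $ j $ j * X $ j $ j)"
  by (simp add: mat_bullet_def trace_def matrix_matrix_mult_diag)

lemma axis_zero [simp]: "axis k 0 = 0"
  by simp

lemma norm_axis: "norm (axis i (x::'a::real_inner)) = norm x"
  by (simp add: norm_eq_sqrt_inner inner_axis_axis)

lemma quad_form_axis: "axis j 1 \<bullet> (M *v axis j 1) = M $ j $ j"
  by (simp add: inner_axis' matrix_vector_mul_component inner_axis)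

lemma psd_diag_nonneg: "psd M \<Longrightarrow> 0 \<le> M $ j $ j"
  unfolding psd_def by (metis quad_form_axis)

lemma pd_diag_pos: "pd M \<Longrightarrow> 0 < M $ j $ j"
  unfolding pd_def by (metis quad_form_axis axis_eq_0_iff zero_neq_one)

lemma psd_sub_outer_diag: "psd (X - outer x) \<Longrightarrow> (x $ j)\<^sup>2 \<le> X $ j $ j"
  using psd_diag_nonneg[of "X - outer x" j] by (simp add: outer_def power2_eq_square)

lemma mat_bullet_outer: "diag_mat P \<Longrightarrow> mat_bullet P (outer x) = x \<bullet> (P *v x)"
  by (simp add: mat_bullet_diag quad_form_diag outer_def power2_eq_square)

section \<open>The convex relaxation (R)\<close>

text \<open>The quadratic form \<open>x\<^sup>T P x + 2 q\<^sup>T x\<close> of a diagonal \<open>P\<close> with \<open>x\<^sub>j\<^sup>2\<close> replaced by \<open>z\<^sub>j\<close>: the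
  objective and constraint functions of (R).\<close>

definition lifted_quad :: "real^'n^'n \<Rightarrow> real^'n \<Rightarrow> real^'n \<Rightarrow> real^'n \<Rightarrow> real" where
  "lifted_quad P q x z = (\<Sum>j\<in>UNIV. P $ j $ j * z $ j) + 2 * (\<Sum>j\<in>UNIV. q $ j * x $ j)"

lemma lifted_quad_squares:
  "diag_mat P \<Longrightarrow> lifted_quad P q x (\<chi> j. (x $ j)\<^sup>2) = x \<bullet> (P *v x) + 2 * (q \<bullet> x)"
  by (simp add: lifted_quad_def quad_form_diag) (simp add: inner_vec_def)

lemma lifted_quad_diagonal:
  "diag_mat P \<Longrightarrow> lifted_quad P q x (\<chi> j. X $ j $ j) = mat_bullet P X + 2 * (q \<bullet> x)"
  by (simp add: lifted_quad_def mat_bullet_diag inner_vec_def)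

lemma lifted_quad_sum:
  "lifted_quad (\<Sum>i\<in>I. y i *\<^sub>R P i) (\<Sum>i\<in>I. y i *\<^sub>R q i) x z
     = (\<Sum>i\<in>I. y i * lifted_quad (P i) (q i) x z)"
proof -
  have "(\<Sum>j\<in>UNIV. (\<Sum>i\<in>I. y i * P i $ j $ j) * z $ j) = (\<Sum>i\<in>I. y i * (\<Sum>j\<in>UNIV. P i $ j $ j * z $ j))"
    by (simp add: sum_distrib_left sum_distrib_right mult_ac sum.swap[of _ UNIV I])
  moreover have "(\<Sum>j\<in>UNIV. (\<Sum>i\<in>I. y i * q i $ j) * x $ j) = (\<Sum>i\<in>I. y i * (\<Sum>j\<in>UNIV. q i $ j * x $ j))"
    by (simp add: sum_distrib_left sum_distrib_right mult_ac sum.swap[of _ UNIV I])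
  ultimately show ?thesis
    by (simp add: lifted_quad_def sum_component sum.distrib distrib_left sum_distrib_left mult_ac)
qed

lemma lifted_quad_add:
  "lifted_quad (P + P') (q + q') x z = lifted_quad P q x z + lifted_quad P' q' x z"
  by (simp add: lifted_quad_def sum.distrib algebra_simps)

lemma lifted_quad_plus:
  "lifted_quad P q (x + x') (z + z') = lifted_quad P q x z + lifted_quad P q x' z'"
  by (simp add: lifted_quad_def sum.distrib algebra_simps)

lemma lifted_quad_scaleR:
  "lifted_quad P q (u *\<^sub>R x) (u *\<^sub>R z) = u * lifted_quad P q x z"
  by (simp add: lifted_quad_def sum_distrib_left algebra_simps)

lemma lifted_quad_axis:
  "lifted_quad P q (axis k t) (axis k s) = P $ k $ k * s + 2 * q $ k * t"
  by (simp add: lifted_quad_def axis_def if_distrib[of "(*) _"] cong: if_cong)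

lemma mem_feasR_iff:
  "(x, z) \<in> feasR A a b \<longleftrightarrow>
     (\<forall>i. lifted_quad (A i) (a i) x z \<le> b i) \<and> (\<forall>j. (x $ j)\<^sup>2 \<le> z $ j)"
  by (simp add: feasR_def lifted_quad_def)

lemma p_star_eq_lifted_quad:
  "p_star D c A a b = (INF (x, z)\<in>feasR A a b. ereal (lifted_quad D c x z))"
  by (simp add: p_star_def lifted_quad_def case_prod_beta)

lemma outer_mem_feasS:
  assumes "\<And>i. diag_mat (A i)" and "x \<in> feasP A a b"
  shows "(x, outer x) \<in> feasS A a b"
proof -
  have "symmetric_mat (outer x)"
    by (simp add: symmetric_mat_def outer_def transpose_def vec_eq_iff mult.commute)
  moreover have "psd (outer x - outer x)"
    by (simp add: psd_def symmetric_mat_def transpose_def vec_eq_iff)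
  ultimately show ?thesis
    using assms by (simp add: feasS_def feasP_def mat_bullet_outer)
qed

lemma diagonal_mem_feasR:
  assumes "\<And>i. diag_mat (A i)" and "(x, X) \<in> feasS A a b"
  shows "(x, \<chi> j. X $ j $ j) \<in> feasR A a b"
  using assms by (auto simp: feasS_def mem_feasR_iff lifted_quad_diagonal psd_sub_outer_diag)

lemma half_quad_lower_bound:
  fixes p r x z :: real
  assumes "0 < p" and "x\<^sup>2 \<le> z"
  shows "p / 2 * z - 2 * r\<^sup>2 / p \<le> p * z + 2 * r * x"
proof -
  have "p * z + 2 * r * x - (p / 2 * z - 2 * r\<^sup>2 / p) = p / 2 * (z - x\<^sup>2) + (p * x + 2 * r)\<^sup>2 / (2 * p)"
    using assms(1) by (simp add: field_simps power2_eq_square)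
  moreover have "0 \<le> p / 2 * (z - x\<^sup>2)"
    using assms by simp
  moreover have "0 \<le> (p * x + 2 * r)\<^sup>2 / (2 * p)"
    using assms(1) by simp
  ultimately show ?thesis by linarith
qed

lemma abs_le_one_plus_square: "\<bar>x::real\<bar> \<le> 1 + x\<^sup>2"
  using zero_le_power2[of "\<bar>x\<bar> - 1"] by (simp add: power2_eq_square algebra_simps)

lemma bounded_lifted_quad_sublevel:
  fixes P :: "real^'n^'n"
  assumes P_pos: "\<And>j. 0 < P $ j $ j"
  shows "bounded {(x, z). lifted_quad P q x z \<le> \<beta> \<and> (\<forall>j. (x $ j)\<^sup>2 \<le> z $ j)}"
proof -
  define C where "C = \<beta> + (\<Sum>j\<in>UNIV. 2 * (q $ j)\<^sup>2 / P $ j $ j)"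
  define R :: "real^'n" where "R = (\<chi> k. 1 + 2 * \<bar>C\<bar> / P $ k $ k)"
  have "\<bar>x $ k\<bar> \<le> R $ k \<and> \<bar>z $ k\<bar> \<le> R $ k"
    if le: "lifted_quad P q x z \<le> \<beta>" and sq: "\<forall>j. (x $ j)\<^sup>2 \<le> z $ j" for x z k
  proof -
    have z_nonneg: "0 \<le> z $ j" for j
      using sq zero_le_power2 order_trans by blast
    have "(\<Sum>j\<in>UNIV. P $ j $ j / 2 * z $ j - 2 * (q $ j)\<^sup>2 / P $ j $ j)
        \<le> (\<Sum>j\<in>UNIV. P $ j $ j * z $ j + 2 * q $ j * x $ j)"
      using P_pos sq by (intro sum_mono half_quad_lower_bound) auto
    also have "\<dots> \<le> \<beta>"
      using le by (simp add: lifted_quad_def sum.distrib sum_distrib_left mult.assoc)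
    finally have "(\<Sum>j\<in>UNIV. P $ j $ j / 2 * z $ j) \<le> C"
      by (simp add: C_def sum_subtractf)
    moreover have "P $ k $ k / 2 * z $ k \<le> (\<Sum>j\<in>UNIV. P $ j $ j / 2 * z $ j)"
      using P_pos z_nonneg by (intro member_le_sum) (auto simp: less_imp_le)
    ultimately have "z $ k \<le> 2 * \<bar>C\<bar> / P $ k $ k"
      using P_pos[of k] by (simp add: field_simps)
    moreover have "\<bar>x $ k\<bar> \<le> 1 + z $ k"
      using abs_le_one_plus_square[of "x $ k"] sq by (meson add_left_mono order_trans)
    ultimately show ?thesis
      using z_nonneg[of k] by (simp add: R_def)
  qed
  then have "{(x, z). lifted_quad P q x z \<le> \<beta> \<and> (\<forall>j. (x $ j)\<^sup>2 \<le> z $ j)} \<subseteq> cbox (- R, - R) (R, R)"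
    by (auto simp: mem_box_cart abs_le_iff minus_le_iff)
  then show ?thesis
    using bounded_cbox bounded_subset by blast
qed

lemma closed_feasR: "closed (feasR A a b)"
proof -
  have "feasR A a b = {p. (\<forall>i. lifted_quad (A i) (a i) (fst p) (snd p) \<le> b i)
                        \<and> (\<forall>j. (fst p $ j)\<^sup>2 \<le> snd p $ j)}"
    by (auto simp: mem_feasR_iff)
  also have "closed \<dots>"
    unfolding lifted_quad_def
    by (intro closed_Collect_conj closed_Collect_all closed_Collect_le continuous_intros)
  finally show ?thesis .
qed

lemma compact_feasR:
  assumes "\<And>i. 0 \<le> y i" and "pd (\<Sum>i\<in>UNIV. y i *\<^sub>R A i)"
  shows "compact (feasR A a b)"
proof -
  let ?P = "\<Sum>i\<in>UNIV. y i *\<^sub>R A i" and ?q = "\<Sum>i\<in>UNIV. y i *\<^sub>R a i"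
  have "feasR A a b \<subseteq> {(x, z). lifted_quad ?P ?q x z \<le> (\<Sum>i\<in>UNIV. y i * b i) \<and> (\<forall>j. (x $ j)\<^sup>2 \<le> z $ j)}"
    using assms(1) by (auto simp: mem_feasR_iff lifted_quad_sum intro!: sum_mono mult_left_mono)
  moreover have "bounded {(x, z). lifted_quad ?P ?q x z \<le> (\<Sum>i\<in>UNIV. y i * b i) \<and> (\<forall>j. (x $ j)\<^sup>2 \<le> z $ j)}"
    using pd_diag_pos[OF assms(2)] by (rule bounded_lifted_quad_sublevel)
  ultimately show ?thesis
    using closed_feasR bounded_subset compact_eq_bounded_closed by blast
qed

lemma eq_zero_if_small_multiples_nonpos:
  fixes c e :: real
  assumes "0 < e" and "\<And>s. \<bar>s\<bar> < e \<Longrightarrow> s * c \<le> 0"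
  shows "c = 0"
proof -
  have "e / 2 * c \<le> 0" and "- (e / 2) * c \<le> 0"
    using assms(2)[of "e / 2"] assms(2)[of "- (e / 2)"] assms(1) by auto
  then show ?thesis
    using assms(1) by (simp add: mult_le_0_iff zero_le_mult_iff)
qed

lemma feasR_box_around_interior:
  assumes diag: "\<And>i. diag_mat (A i)" and interior: "feasS_has_interior A a b"
  obtains x0 z0 e where "0 < e"
    and "\<And>k t s. \<bar>t\<bar> < e \<Longrightarrow> \<bar>s\<bar> < e \<Longrightarrow> (x0 + axis k t, z0 + axis k s) \<in> feasR A a b"
proof -
  obtain x0 X0 e where e: "0 < e" and sym: "symmetric_mat X0"
    and ball: "\<And>x X. symmetric_mat X \<Longrightarrow> dist x x0 < e \<Longrightarrow> dist X X0 < e \<Longrightarrow> (x, X) \<in> feasS A a b"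
    using interior unfolding feasS_has_interior_def by blast
  have "(x0 + axis k t, (\<chi> j. X0 $ j $ j) + axis k s) \<in> feasR A a b"
    if "\<bar>t\<bar> < e" and "\<bar>s\<bar> < e" for k t s
  proof -
    have "(x0 + axis k t, X0 + axis k (axis k s)) \<in> feasS A a b" (is "(_, ?X) \<in> _")
    proof (rule ball)
      show "symmetric_mat (X0 + axis k (axis k s))"
        using sym by (auto simp: symmetric_mat_def transpose_def vec_eq_iff axis_def)
    qed (use that in \<open>simp_all add: dist_norm norm_axis\<close>)
    then have "(x0 + axis k t, \<chi> j. ?X $ j $ j) \<in> feasR A a b"
      by (rule diagonal_mem_feasR[OF diag])
    moreover have "(\<chi> j. ?X $ j $ j) = (\<chi> j. X0 $ j $ j) + axis k s"
      by (simp add: vec_eq_iff axis_def)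
    ultimately show ?thesis
      by simp
  qed
  with e show ?thesis
    by (rule that)
qed

text \<open>A constraint active at the Slater point is constant: otherwise a perturbation of the
  interior point of (S) along a single diagonal entry or coordinate would violate it.\<close>

lemma feasR_slater_point:
  assumes diag: "\<And>i. diag_mat (A i)" and interior: "feasS_has_interior A a b"
  obtains x0 z0 where "(x0, z0) \<in> feasR A a b" and "\<And>j. (x0 $ j)\<^sup>2 < z0 $ j"
    and "\<And>i x z. lifted_quad (A i) (a i) x0 z0 = b i \<Longrightarrow> lifted_quad (A i) (a i) x z = b i"
proof (rule feasR_box_around_interior[OF diag interior])
  fix x0 z0 e
  assume e: "0 < e"
    and box: "\<And>k t s. \<bar>t\<bar> < e \<Longrightarrow> \<bar>s\<bar> < e \<Longrightarrow> (x0 + axis k t, z0 + axis k s) \<in> feasR A a b"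
  show ?thesis
  proof (rule that)
    show "(x0, z0) \<in> feasR A a b"
      using box[of 0 0] e by simp
    show "(x0 $ j)\<^sup>2 < z0 $ j" for j
    proof -
      have "(x0, z0 + axis j (- (e / 2))) \<in> feasR A a b"
        using box[of 0 "- (e / 2)" j] e by simp
      then have "(x0 $ j)\<^sup>2 \<le> (z0 + axis j (- (e / 2))) $ j"
        unfolding mem_feasR_iff by blast
      then show ?thesis
        using e by simp
    qed
    show "lifted_quad (A i) (a i) x z = b i"
      if active: "lifted_quad (A i) (a i) x0 z0 = b i" for i x z
    proof -
      have "A i $ k $ k = 0 \<and> a i $ k = 0" for k
      proof -
        have slack: "A i $ k $ k * s + 2 * a i $ k * t \<le> 0" if "\<bar>t\<bar> < e" and "\<bar>s\<bar> < e" for t s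
        proof -
          have "lifted_quad (A i) (a i) (x0 + axis k t) (z0 + axis k s) \<le> b i"
            using box[OF that, of k] unfolding mem_feasR_iff by blast
          then show ?thesis
            using active by (simp add: lifted_quad_plus lifted_quad_axis)
        qed
        have "A i $ k $ k = 0"
          using slack[of 0] e by (intro eq_zero_if_small_multiples_nonpos[OF e]) (simp add: mult.commute)
        moreover have "2 * a i $ k = 0"
          using slack[of _ 0] e by (intro eq_zero_if_small_multiples_nonpos[OF e]) (simp add: mult.commute)
        ultimately show ?thesis
          by simp
      qed
      then show ?thesis
        using active by (simp add: lifted_quad_def)
    qed
  qed
qed

section \<open>Lagrange multipliers for convex programs\<close>

lemma sum_nonpos_eq_0_iff:
  fixes f :: "'a \<Rightarrow> real"
  assumes "finite A" and "\<And>x. x \<in> A \<Longrightarrow> f x \<le> 0"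
  shows "sum f A = 0 \<longleftrightarrow> (\<forall>x\<in>A. f x = 0)"
  using sum_nonneg_eq_0_iff[of A "\<lambda>x. - f x"] assms by (simp add: sum_negf)

lemma nonneg_if_bounded_along_ray:
  fixes c k B :: real
  assumes "\<And>s. 0 \<le> s \<Longrightarrow> c - s * k \<le> B"
  shows "0 \<le> k"
proof (rule ccontr)
  assume "\<not> 0 \<le> k"
  then have "k < 0" by simp
  then have "(\<bar>B - c\<bar> + 1) / - k * k = - (\<bar>B - c\<bar> + 1)"
    by simp
  moreover have "c - (\<bar>B - c\<bar> + 1) / - k * k \<le> B"
    using \<open>k < 0\<close> by (intro assms) (simp add: divide_nonneg_neg)
  ultimately show False by linarith
qed

definition constraint_value_set ::
    "('a \<Rightarrow> real) \<Rightarrow> ('k \<Rightarrow> 'a \<Rightarrow> real) \<Rightarrow> 'k set \<Rightarrow> ((real^'k) \<times> real) set" where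
  "constraint_value_set f g K = {v. \<exists>x. (\<forall>k\<in>K. g k x \<le> fst v $ k) \<and> f x \<le> snd v}"

lemma convex_constraint_value_set:
  fixes f :: "'a::real_vector \<Rightarrow> real" and g :: "'k::finite \<Rightarrow> 'a \<Rightarrow> real"
  assumes f_convex: "convex_on UNIV f" and g_convex: "\<And>k. k \<in> K \<Longrightarrow> convex_on UNIV (g k)"
  shows "convex (constraint_value_set f g K)"
proof (rule convexI)
  fix v w :: "(real^'k) \<times> real" and s t :: real
  assume "v \<in> constraint_value_set f g K" "w \<in> constraint_value_set f g K"
    and st: "0 \<le> s" "0 \<le> t" "s + t = 1"
  then obtain x y where x: "\<forall>k\<in>K. g k x \<le> fst v $ k" "f x \<le> snd v"
    and y: "\<forall>k\<in>K. g k y \<le> fst w $ k" "f y \<le> snd w"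
    by (auto simp: constraint_value_set_def)
  have "g k (s *\<^sub>R x + t *\<^sub>R y) \<le> fst (s *\<^sub>R v + t *\<^sub>R w) $ k" if "k \<in> K" for k
  proof -
    have "g k (s *\<^sub>R x + t *\<^sub>R y) \<le> s * g k x + t * g k y"
      using g_convex[OF that] st by (simp add: convex_on_def)
    also have "\<dots> \<le> s * fst v $ k + t * fst w $ k"
      using x y st that by (intro add_mono mult_left_mono) auto
    finally show ?thesis by simp
  qed
  moreover have "f (s *\<^sub>R x + t *\<^sub>R y) \<le> snd (s *\<^sub>R v + t *\<^sub>R w)"
  proof -
    have "f (s *\<^sub>R x + t *\<^sub>R y) \<le> s * f x + t * f y"
      using f_convex st by (simp add: convex_on_def)
    also have "\<dots> \<le> s * snd v + t * snd w"
      using x y st by (intro add_mono mult_left_mono) auto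
    finally show ?thesis by simp
  qed
  ultimately show "s *\<^sub>R v + t *\<^sub>R w \<in> constraint_value_set f g K"
    unfolding constraint_value_set_def by blast
qed

lemma separating_hyperplane_constraint_value_set:
  fixes f :: "'a::real_vector \<Rightarrow> real" and g :: "'k::finite \<Rightarrow> 'a \<Rightarrow> real"
  assumes f_convex: "convex_on UNIV f" and g_convex: "\<And>k. k \<in> K \<Longrightarrow> convex_on UNIV (g k)"
    and lower_bound: "\<And>x. (\<forall>k\<in>K. g k x \<le> 0) \<Longrightarrow> p \<le> f x"
  obtains \<alpha> :: "real^'k" and \<gamma> bb where "\<gamma> \<noteq> 0 \<or> (\<exists>k. \<alpha> $ k \<noteq> 0)"
    and "\<And>u t. \<forall>k. u $ k \<le> 0 \<Longrightarrow> t < p \<Longrightarrow> \<alpha> \<bullet> u + \<gamma> * t \<le> bb"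
    and "\<And>x u t. \<forall>k\<in>K. g k x \<le> u $ k \<Longrightarrow> f x \<le> t \<Longrightarrow> bb \<le> \<alpha> \<bullet> u + \<gamma> * t"
proof -
  let ?SA = "constraint_value_set f g K"
  define SB :: "((real^'k) \<times> real) set"
    where "SB = {v. (\<forall>k. fst v $ k \<le> 0) \<and> snd v < p}"
  have "convex SB"
    by (rule convexI) (auto simp: SB_def intro: convex_bound_le convex_bound_lt)
  moreover have "convex ?SA"
    using f_convex g_convex by (rule convex_constraint_value_set)
  moreover have "((\<chi> k. g k 0), f 0) \<in> ?SA"
    by (auto simp: constraint_value_set_def)
  moreover have "(0, p - 1) \<in> SB"
    by (simp add: SB_def)
  moreover have "SB \<inter> ?SA = {}"
  proof -
    have False if "v \<in> SB" and "v \<in> ?SA" for v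
    proof -
      obtain x where x: "\<forall>k\<in>K. g k x \<le> fst v $ k" "f x \<le> snd v"
        using \<open>v \<in> ?SA\<close> by (auto simp: constraint_value_set_def)
      have "\<forall>k\<in>K. g k x \<le> 0"
        using x(1) \<open>v \<in> SB\<close> by (auto simp: SB_def intro: order_trans)
      then show False
        using lower_bound[of x] x(2) \<open>v \<in> SB\<close> by (simp add: SB_def)
    qed
    then show ?thesis by blast
  qed
  ultimately obtain w bb where "w \<noteq> 0" and "\<forall>v\<in>SB. w \<bullet> v \<le> bb" and "\<forall>v\<in>?SA. bb \<le> w \<bullet> v"
    using separating_hyperplane_sets[of SB ?SA] by blast
  moreover obtain \<alpha> \<gamma> where "w = (\<alpha>, \<gamma>)"
    by fastforce
  ultimately have sep: "(\<alpha>, \<gamma>) \<noteq> 0" "\<forall>v\<in>SB. (\<alpha>, \<gamma>) \<bullet> v \<le> bb" "\<forall>v\<in>?SA. bb \<le> (\<alpha>, \<gamma>) \<bullet> v"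
    by simp_all
  show ?thesis
  proof (rule that[of \<gamma> \<alpha> bb])
    show "\<gamma> \<noteq> 0 \<or> (\<exists>k. \<alpha> $ k \<noteq> 0)"
      using sep(1) by (auto simp: vec_eq_iff zero_prod_def)
    show "\<alpha> \<bullet> u + \<gamma> * t \<le> bb" if "\<forall>k. u $ k \<le> 0" and "t < p" for u t
    proof -
      have "(u, t) \<in> SB"
        using that by (simp add: SB_def)
      then show ?thesis
        using sep(2) by force
    qed
    show "bb \<le> \<alpha> \<bullet> u + \<gamma> * t" if "\<forall>k\<in>K. g k x \<le> u $ k" and "f x \<le> t" for x u t
    proof -
      have "(u, t) \<in> ?SA"
        using that by (auto simp: constraint_value_set_def)
      then show ?thesis
        using sep(3) by force
    qed
  qed
qed

lemma mult_le_if_mult_le_below: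
  fixes \<gamma> p B :: real
  assumes "0 \<le> \<gamma>" and "\<And>t. t < p \<Longrightarrow> \<gamma> * t \<le> B"
  shows "\<gamma> * p \<le> B"
proof (cases "\<gamma> = 0")
  case True
  then show ?thesis
    using assms(2)[of "p - 1"] by simp
next
  case False
  with assms(1) have "0 < \<gamma>" by simp
  show ?thesis
  proof (rule dense_le)
    fix y assume "y < \<gamma> * p"
    then show "y \<le> B"
      using assms(2)[of "y / \<gamma>"] \<open>0 < \<gamma>\<close> by (simp add: field_simps)
  qed
qed

lemma convex_fritz_john:
  fixes f :: "'a::real_vector \<Rightarrow> real" and g :: "'k::finite \<Rightarrow> 'a \<Rightarrow> real"
  assumes "convex_on UNIV f" and "\<And>k. k \<in> K \<Longrightarrow> convex_on UNIV (g k)"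
    and "\<And>x. (\<forall>k\<in>K. g k x \<le> 0) \<Longrightarrow> p \<le> f x"
  obtains \<gamma> \<alpha> where "0 \<le> \<gamma>" and "\<And>k. 0 \<le> \<alpha> k" and "\<And>k. k \<notin> K \<Longrightarrow> \<alpha> k = 0"
    and "\<gamma> \<noteq> 0 \<or> (\<exists>k. \<alpha> k \<noteq> 0)" and "\<And>x. \<gamma> * p \<le> \<gamma> * f x + (\<Sum>k\<in>UNIV. \<alpha> k * g k x)"
proof (rule separating_hyperplane_constraint_value_set[OF assms])
  fix \<alpha> :: "real^'k" and \<gamma> bb
  assume nontrivial: "\<gamma> \<noteq> 0 \<or> (\<exists>k. \<alpha> $ k \<noteq> 0)"
    and below: "\<And>u t. \<forall>k. u $ k \<le> 0 \<Longrightarrow> t < p \<Longrightarrow> \<alpha> \<bullet> u + \<gamma> * t \<le> bb"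
    and above: "\<And>x u t. \<forall>k\<in>K. g k x \<le> u $ k \<Longrightarrow> f x \<le> t \<Longrightarrow> bb \<le> \<alpha> \<bullet> u + \<gamma> * t"
  define G where "G x = (\<chi> k. g k x)" for x
  have \<alpha>_nonneg: "0 \<le> \<alpha> $ k" for k
  proof (rule nonneg_if_bounded_along_ray)
    show "\<gamma> * (p - 1) - s * \<alpha> $ k \<le> bb" if "0 \<le> s" for s
    proof -
      have "\<forall>j. axis k (- s) $ j \<le> 0"
        using that by (simp add: axis_def)
      then show ?thesis
        using below[of "axis k (- s)" "p - 1"] by (simp add: inner_axis mult.commute)
    qed
  qed
  have \<gamma>_nonneg: "0 \<le> \<gamma>"
  proof (rule nonneg_if_bounded_along_ray)
    show "\<gamma> * (p - 1) - s * \<gamma> \<le> bb" if "0 \<le> s" for s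
      using below[of 0 "p - 1 - s"] that by (simp add: algebra_simps)
  qed
  have \<alpha>_outside: "\<alpha> $ k = 0" if "k \<notin> K" for k
  proof -
    have "0 \<le> - \<alpha> $ k"
    proof (rule nonneg_if_bounded_along_ray)
      show "- (\<alpha> \<bullet> G 0 + \<gamma> * f 0) - s * - \<alpha> $ k \<le> - bb" if "0 \<le> s" for s
      proof -
        have "\<forall>j\<in>K. g j 0 \<le> (G 0 + axis k (- s)) $ j"
          using \<open>k \<notin> K\<close> by (auto simp: G_def axis_def)
        then show ?thesis
          using above[of 0 "G 0 + axis k (- s)" "f 0"] by (simp add: inner_add_right inner_axis mult.commute)
      qed
    qed
    then show ?thesis
      using \<alpha>_nonneg[of k] by simp
  qed
  have "\<gamma> * p \<le> bb"
    using \<gamma>_nonneg by (rule mult_le_if_mult_le_below) (use below[of 0] in simp)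
  then have bound: "\<gamma> * p \<le> \<gamma> * f x + (\<Sum>k\<in>UNIV. \<alpha> $ k * g k x)" for x
    using above[of x "G x" "f x"] by (simp add: G_def inner_vec_def add.commute)
  show ?thesis
    by (rule that[of \<gamma> "\<lambda>k. \<alpha> $ k"]) (use \<gamma>_nonneg \<alpha>_nonneg \<alpha>_outside nontrivial bound in auto)
qed

lemma slater_lagrange_multipliers:
  fixes f :: "'a::real_vector \<Rightarrow> real" and g :: "'k::finite \<Rightarrow> 'a \<Rightarrow> real"
  assumes "convex_on UNIV f" and "\<And>k. k \<in> K \<Longrightarrow> convex_on UNIV (g k)"
    and slater: "\<And>k. k \<in> K \<Longrightarrow> g k x0 < 0"
    and "\<And>x. (\<forall>k\<in>K. g k x \<le> 0) \<Longrightarrow> p \<le> f x"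
  obtains \<mu> where "\<And>k. 0 \<le> \<mu> k" and "\<And>k. k \<notin> K \<Longrightarrow> \<mu> k = 0"
    and "\<And>x. p \<le> f x + (\<Sum>k\<in>UNIV. \<mu> k * g k x)"
proof (rule convex_fritz_john[OF assms(1,2,4)])
  fix \<gamma> and \<alpha> :: "'k \<Rightarrow> real"
  assume \<gamma>: "0 \<le> \<gamma>" and \<alpha>: "\<And>k. 0 \<le> \<alpha> k" "\<And>k. k \<notin> K \<Longrightarrow> \<alpha> k = 0"
    and nontrivial: "\<gamma> \<noteq> 0 \<or> (\<exists>k. \<alpha> k \<noteq> 0)"
    and bound: "\<And>x. \<gamma> * p \<le> \<gamma> * f x + (\<Sum>k\<in>UNIV. \<alpha> k * g k x)"
  have "\<gamma> \<noteq> 0"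
  proof
    assume "\<gamma> = 0"
    have terms_nonpos: "\<alpha> k * g k x0 \<le> 0" for k
      using \<alpha> slater[of k] by (cases "k \<in> K") (auto simp: mult_nonneg_nonpos)
    have "0 \<le> (\<Sum>k\<in>UNIV. \<alpha> k * g k x0)"
      using bound[of x0] \<open>\<gamma> = 0\<close> by simp
    then have "(\<Sum>k\<in>UNIV. \<alpha> k * g k x0) = 0"
      using sum_nonpos[of UNIV "\<lambda>k. \<alpha> k * g k x0"] terms_nonpos by simp
    then have "\<alpha> k * g k x0 = 0" for k
      using sum_nonpos_eq_0_iff[of UNIV "\<lambda>k. \<alpha> k * g k x0"] terms_nonpos by simp
    then have "\<alpha> k = 0" for k
      using \<alpha>(2) slater by (cases "k \<in> K") fastforce+
    then show False
      using nontrivial \<open>\<gamma> = 0\<close> by simp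
  qed
  with \<gamma> have "0 < \<gamma>" by simp
  show ?thesis
  proof
    show "0 \<le> \<alpha> k / \<gamma>" and "k \<notin> K \<Longrightarrow> \<alpha> k / \<gamma> = 0" for k
      using \<alpha> \<open>0 < \<gamma>\<close> by simp_all
    show "p \<le> f x + (\<Sum>k\<in>UNIV. \<alpha> k / \<gamma> * g k x)" for x
    proof -
      have "\<gamma> * (f x + (\<Sum>k\<in>UNIV. \<alpha> k / \<gamma> * g k x)) = \<gamma> * f x + (\<Sum>k\<in>UNIV. \<alpha> k * g k x)"
        using \<open>0 < \<gamma>\<close> by (simp add: distrib_left sum_distrib_left)
      then have "\<gamma> * p \<le> \<gamma> * (f x + (\<Sum>k\<in>UNIV. \<alpha> k / \<gamma> * g k x))"
        using bound[of x] by simp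
      then show ?thesis
        using \<open>0 < \<gamma>\<close> by (rule mult_left_le_imp_le)
    qed
  qed
qed

section \<open>Multipliers of (R)\<close>

lemma convex_on_lifted_quad:
  fixes P :: "real^'n^'n"
  shows "convex_on UNIV (\<lambda>v. lifted_quad P q (fst v) (snd v) - \<beta>)"
proof -
  have "lifted_quad P q (fst (u *\<^sub>R v + w *\<^sub>R v')) (snd (u *\<^sub>R v + w *\<^sub>R v')) - \<beta>
      = u * (lifted_quad P q (fst v) (snd v) - \<beta>) + w * (lifted_quad P q (fst v') (snd v') - \<beta>)"
    if "u + w = 1" for u w :: real and v v' :: "(real^'n) \<times> (real^'n)"
  proof -
    have "\<beta> = u * \<beta> + w * \<beta>"
      using that by (metis distrib_right mult_1)
    then show ?thesis
      by (simp add: lifted_quad_plus lifted_quad_scaleR algebra_simps)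
  qed
  then show ?thesis
    by (simp add: convex_on_def)
qed

lemma convex_on_square_gap: "convex_on UNIV (\<lambda>v::(real^'n) \<times> (real^'n). (fst v $ j)\<^sup>2 - snd v $ j)"
proof -
  have "((u * fst v $ j + w * fst v' $ j))\<^sup>2 - (u * snd v $ j + w * snd v' $ j)
      \<le> u * ((fst v $ j)\<^sup>2 - snd v $ j) + w * ((fst v' $ j)\<^sup>2 - snd v' $ j)"
    if "0 \<le> u" "0 \<le> w" "u + w = 1" for u w :: real and v v' :: "(real^'n) \<times> (real^'n)"
  proof -
    have "1 - w = u"
      using that(3) by simp
    have "((1 - w) * fst v $ j + w * fst v' $ j)\<^sup>2 \<le> (1 - w) * (fst v $ j)\<^sup>2 + w * (fst v' $ j)\<^sup>2"
      using convex_onD[OF convex_power2, of w "fst v $ j" "fst v' $ j"] that by simp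
    then have "(u * fst v $ j + w * fst v' $ j)\<^sup>2 \<le> u * (fst v $ j)\<^sup>2 + w * (fst v' $ j)\<^sup>2"
      unfolding \<open>1 - w = u\<close> .
    then show ?thesis
      by (simp add: algebra_simps)
  qed
  then show ?thesis
    by (simp add: convex_on_def)
qed

lemma sum_UNIV_sum_type:
  "(\<Sum>k\<in>UNIV. h k) = (\<Sum>i\<in>UNIV. h (Inl i)) + (\<Sum>j\<in>UNIV. h (Inr j))"
  for h :: "'a::finite + 'b::finite \<Rightarrow> 'c::comm_monoid_add"
  unfolding UNIV_Plus_UNIV[symmetric] sum.Plus[OF finite finite] by simp

lemma feasR_lagrange_multipliers:
  fixes A :: "'m::finite \<Rightarrow> real^'n^'n"
  assumes feasible: "(x0, z0) \<in> feasR A a b" and strict: "\<And>j. (x0 $ j)\<^sup>2 < z0 $ j"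
    and active: "\<And>i x z. lifted_quad (A i) (a i) x0 z0 = b i \<Longrightarrow> lifted_quad (A i) (a i) x z = b i"
    and lower: "\<And>x z. (x, z) \<in> feasR A a b \<Longrightarrow> p \<le> lifted_quad D c x z"
  obtains \<mu> \<sigma> where "\<And>i. 0 \<le> \<mu> i" and "\<And>j. 0 \<le> \<sigma> j"
    and "\<And>x z. p \<le> lifted_quad D c x z + (\<Sum>i\<in>UNIV. \<mu> i * (lifted_quad (A i) (a i) x z - b i))
                                    + (\<Sum>j\<in>UNIV. \<sigma> j * ((x $ j)\<^sup>2 - z $ j))"
proof -
  \<comment> \<open>Constraints active at the Slater point are constant and can be dropped; the remaining ones
    and the \<open>x\<^sub>j\<^sup>2 \<le> z\<^sub>j\<close> hold strictly there.\<close>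
  define g :: "'m + 'n \<Rightarrow> (real^'n) \<times> (real^'n) \<Rightarrow> real" where
    "g k = (case k of Inl i \<Rightarrow> (\<lambda>v. lifted_quad (A i) (a i) (fst v) (snd v) - b i)
                    | Inr j \<Rightarrow> (\<lambda>v. (fst v $ j)\<^sup>2 - snd v $ j))" for k
  define K :: "('m + 'n) set" where "K = Inl ` {i. lifted_quad (A i) (a i) x0 z0 < b i} \<union> range Inr"
  have convex_g: "convex_on UNIV (g k)" for k
    using convex_on_lifted_quad convex_on_square_gap
    by (cases k) (simp_all add: g_def)
  have slater_g: "g k (x0, z0) < 0" if "k \<in> K" for k
    using that strict by (auto simp: K_def g_def)
  have lower_g: "p \<le> lifted_quad D c (fst v) (snd v)" if "\<forall>k\<in>K. g k v \<le> 0" for v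
  proof -
    have "lifted_quad (A i) (a i) (fst v) (snd v) \<le> b i" for i
    proof (cases "lifted_quad (A i) (a i) x0 z0 < b i")
      case True
      then show ?thesis
        using that by (force simp: K_def g_def)
    next
      case False
      moreover have "lifted_quad (A i) (a i) x0 z0 \<le> b i"
        using feasible unfolding mem_feasR_iff by blast
      ultimately have "lifted_quad (A i) (a i) x0 z0 = b i"
        by simp
      then show ?thesis
        using active by simp
    qed
    moreover have "(fst v $ j)\<^sup>2 \<le> snd v $ j" for j
      using that by (force simp: K_def g_def)
    ultimately have "(fst v, snd v) \<in> feasR A a b"
      unfolding mem_feasR_iff by blast
    then show ?thesis
      by (rule lower)
  qed
  have convex_f: "convex_on UNIV (\<lambda>v. lifted_quad D c (fst v) (snd v))"
    using convex_on_lifted_quad[of D c 0] by simp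
  show ?thesis
  proof (rule slater_lagrange_multipliers[OF convex_f convex_g slater_g lower_g])
    fix \<nu> assume \<nu>_nonneg: "\<And>k. 0 \<le> \<nu> k" and "\<And>k. k \<notin> K \<Longrightarrow> \<nu> k = 0"
      and bound: "\<And>v. p \<le> lifted_quad D c (fst v) (snd v) + (\<Sum>k\<in>UNIV. \<nu> k * g k v)"
    show ?thesis
    proof (rule that[of "\<lambda>i. \<nu> (Inl i)" "\<lambda>j. \<nu> (Inr j)"])
      show "0 \<le> \<nu> (Inl i)" and "0 \<le> \<nu> (Inr j)" for i j
        using \<nu>_nonneg by simp_all
      show "p \<le> lifted_quad D c x z + (\<Sum>i\<in>UNIV. \<nu> (Inl i) * (lifted_quad (A i) (a i) x z - b i))
                 + (\<Sum>j\<in>UNIV. \<nu> (Inr j) * ((x $ j)\<^sup>2 - z $ j))" for x z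
        using bound[of "(x, z)"] by (simp add: sum_UNIV_sum_type g_def add.assoc)
    qed
  qed
qed

lemma eq_zero_if_affine_bounded_below:
  fixes K M p :: real
  assumes "\<And>s. p \<le> s * K + M"
  shows "K = 0"
proof -
  have "0 \<le> K"
  proof (rule nonneg_if_bounded_along_ray[of "- M" _ "- p"])
    show "- M - s * K \<le> - p" for s
      using assms[of s] by simp
  qed
  moreover have "0 \<le> - K"
  proof (rule nonneg_if_bounded_along_ray[of "- M" _ "- p"])
    show "- M - s * - K \<le> - p" for s
      using assms[of "- s"] by simp
  qed
  ultimately show ?thesis by simp
qed

lemma lagrangian_coefficients:
  fixes P :: "real^'n^'n"
  assumes bounded: "\<And>x z. p \<le> lifted_quad P q x z + (\<Sum>j\<in>UNIV. \<sigma> j * ((x $ j)\<^sup>2 - z $ j)) + M"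
  shows "P $ j $ j = \<sigma> j" and "\<sigma> k = 0 \<Longrightarrow> q $ k = 0"
proof -
  have "(\<Sum>l\<in>UNIV. \<sigma> l * (((0::real^'n) $ l)\<^sup>2 - axis j s $ l)) = - (\<sigma> j * s)" for s
    by (simp add: axis_def if_distrib[of "(*) _"] sum_negf cong: if_cong)
  then have "p \<le> s * (P $ j $ j - \<sigma> j) + M" for s
    using bounded[of 0 "axis j s"] lifted_quad_axis[of P q j 0 s] by (simp add: algebra_simps)
  then show "P $ j $ j = \<sigma> j"
    using eq_zero_if_affine_bounded_below by fastforce
  assume "\<sigma> k = 0"
  then have "(\<Sum>l\<in>UNIV. \<sigma> l * ((axis k s $ l)\<^sup>2 - (0::real^'n) $ l)) = 0" for s
    by (intro sum.neutral) (simp add: axis_def)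
  then have "p \<le> s * (2 * q $ k) + M" for s
    using bounded[of "axis k s" 0] lifted_quad_axis[of P q k s 0] by (simp add: algebra_simps)
  then show "q $ k = 0"
    using eq_zero_if_affine_bounded_below by fastforce
qed

lemma square_multipliers_pos:
  fixes D :: "real^'n^'n" and A :: "'m::finite \<Rightarrow> real^'n^'n"
  assumes Sk_empty: "\<And>k. S_set D c A a k = {}"
    and \<mu>_nonneg: "\<And>i. 0 \<le> \<mu> i" and \<sigma>_nonneg: "\<And>j. 0 \<le> \<sigma> j"
    and bounded: "\<And>x z. p \<le> lifted_quad D c x z + (\<Sum>i\<in>UNIV. \<mu> i * (lifted_quad (A i) (a i) x z - b i))
                                    + (\<Sum>j\<in>UNIV. \<sigma> j * ((x $ j)\<^sup>2 - z $ j))"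
  shows "0 < \<sigma> k"
proof (rule ccontr)
  assume "\<not> 0 < \<sigma> k"
  with \<sigma>_nonneg have "\<sigma> k = 0"
    by (simp add: order.strict_iff_order)
  define P where "P = D + (\<Sum>i\<in>UNIV. \<mu> i *\<^sub>R A i)"
  define q where "q = c + (\<Sum>i\<in>UNIV. \<mu> i *\<^sub>R a i)"
  have "p \<le> lifted_quad P q x z + (\<Sum>j\<in>UNIV. \<sigma> j * ((x $ j)\<^sup>2 - z $ j)) + - (\<Sum>i\<in>UNIV. \<mu> i * b i)"
    for x z
    using bounded[of x z]
    by (simp add: P_def q_def lifted_quad_add lifted_quad_sum right_diff_distrib sum_subtractf)
  note coefficients = lagrangian_coefficients[OF this]
  have "\<mu> \<in> S_set D c A a k"
    unfolding S_set_def
    using coefficients(1)[of k] coefficients(2)[OF \<open>\<sigma> k = 0\<close>] coefficients(1) \<sigma>_nonneg \<mu>_nonneg \<open>\<sigma> k = 0\<close>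
    by (simp add: P_def q_def mult.commute)
  with Sk_empty show False
    by simp
qed

lemma feasR_minimizer_tight:
  fixes D :: "real^'n^'n" and A :: "'m::finite \<Rightarrow> real^'n^'n"
  assumes Sk_empty: "\<And>k. S_set D c A a k = {}"
    and slater: "(x0, z0) \<in> feasR A a b" "\<And>j. (x0 $ j)\<^sup>2 < z0 $ j"
      "\<And>i x z. lifted_quad (A i) (a i) x0 z0 = b i \<Longrightarrow> lifted_quad (A i) (a i) x z = b i"
    and feasible: "(xs, zs) \<in> feasR A a b"
    and minimal: "\<And>x z. (x, z) \<in> feasR A a b \<Longrightarrow> lifted_quad D c xs zs \<le> lifted_quad D c x z"
  shows "zs = (\<chi> j. (xs $ j)\<^sup>2)"
proof (rule feasR_lagrange_multipliers[OF slater minimal])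
  fix \<mu> \<sigma>
  assume \<mu>_nonneg: "\<And>i. 0 \<le> \<mu> i" and \<sigma>_nonneg: "\<And>j. 0 \<le> \<sigma> j"
    and bounded: "\<And>x z. lifted_quad D c xs zs \<le> lifted_quad D c x z
       + (\<Sum>i\<in>UNIV. \<mu> i * (lifted_quad (A i) (a i) x z - b i)) + (\<Sum>j\<in>UNIV. \<sigma> j * ((x $ j)\<^sup>2 - z $ j))"
  have constraint_terms: "\<mu> i * (lifted_quad (A i) (a i) xs zs - b i) \<le> 0" for i
    using feasible \<mu>_nonneg[of i] by (simp add: mem_feasR_iff mult_nonneg_nonpos)
  have square_terms: "\<sigma> j * ((xs $ j)\<^sup>2 - zs $ j) \<le> 0" for j
    using feasible \<sigma>_nonneg[of j] by (simp add: mem_feasR_iff mult_nonneg_nonpos)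
  have "(\<Sum>i\<in>UNIV. \<mu> i * (lifted_quad (A i) (a i) xs zs - b i)) \<le> 0"
    by (rule sum_nonpos) (rule constraint_terms)
  moreover have "(\<Sum>j\<in>UNIV. \<sigma> j * ((xs $ j)\<^sup>2 - zs $ j)) \<le> 0"
    by (rule sum_nonpos) (rule square_terms)
  ultimately have "(\<Sum>j\<in>UNIV. \<sigma> j * ((xs $ j)\<^sup>2 - zs $ j)) = 0"
    using bounded[of xs zs] by linarith
  then have slack: "\<sigma> j * ((xs $ j)\<^sup>2 - zs $ j) = 0" for j
    using sum_nonpos_eq_0_iff[of UNIV "\<lambda>j. \<sigma> j * ((xs $ j)\<^sup>2 - zs $ j)"] square_terms by simp
  have "zs $ j = (xs $ j)\<^sup>2" for j
    using slack[of j] square_multipliers_pos[OF Sk_empty \<mu>_nonneg \<sigma>_nonneg bounded, of j] by simp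
  then show ?thesis
    by (simp add: vec_eq_iff)
qed

lemma feasR_minimizer_exists:
  assumes diagA: "\<And>i. diag_mat (A i)" and "feasP A a b \<noteq> {}"
    and "\<And>i. 0 \<le> y i" and "pd (\<Sum>i\<in>UNIV. y i *\<^sub>R A i)"
  obtains xs zs where "(xs, zs) \<in> feasR A a b"
    and "\<And>x z. (x, z) \<in> feasR A a b \<Longrightarrow> lifted_quad D c xs zs \<le> lifted_quad D c x z"
proof -
  have "compact (feasR A a b)"
    using assms(3,4) by (rule compact_feasR)
  moreover have "feasR A a b \<noteq> {}"
  proof -
    obtain x where "x \<in> feasP A a b"
      using assms(2) by blast
    then have "(x, outer x) \<in> feasS A a b"
      by (rule outer_mem_feasS[OF diagA])
    then have "(x, \<chi> j. outer x $ j $ j) \<in> feasR A a b"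
      by (rule diagonal_mem_feasR[OF diagA])
    then show ?thesis
      by blast
  qed
  moreover have "continuous_on (feasR A a b) (\<lambda>v. lifted_quad D c (fst v) (snd v))"
    unfolding lifted_quad_def by (intro continuous_intros)
  ultimately obtain v where "v \<in> feasR A a b"
    and "\<forall>w\<in>feasR A a b. lifted_quad D c (fst v) (snd v) \<le> lifted_quad D c (fst w) (snd w)"
    using continuous_attains_inf by blast
  then show ?thesis
    using that[of "fst v" "snd v"] by fastforce
qed

lemma p_star_le_v_star:
  assumes "diag_mat D" and "\<And>i. diag_mat (A i)"
  shows "p_star D c A a b \<le> v_star D c A a b"
  unfolding v_star_def
proof (rule INF_greatest)
  fix v assume "v \<in> feasS A a b"
  then obtain x X where v: "v = (x, X)" and feasible: "(x, X) \<in> feasS A a b"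
    by (cases v) auto
  have "(x, \<chi> j. X $ j $ j) \<in> feasR A a b"
    by (rule diagonal_mem_feasR[OF assms(2) feasible])
  then have "p_star D c A a b \<le> ereal (lifted_quad D c x (\<chi> j. X $ j $ j))"
    unfolding p_star_eq_lifted_quad by (rule INF_lower2) simp
  then show "p_star D c A a b \<le> ereal (mat_bullet D (snd v) + 2 * (c \<bullet> fst v))"
    using lifted_quad_diagonal[OF assms(1)] v by simp
qed

lemma v_star_le_c_star:
  assumes "diag_mat D" and "\<And>i. diag_mat (A i)"
  shows "v_star D c A a b \<le> c_star D c A a b"
  unfolding c_star_def
proof (rule INF_greatest)
  fix x assume "x \<in> feasP A a b"
  then have "(x, outer x) \<in> feasS A a b"
    by (rule outer_mem_feasS[OF assms(2)])
  then have "v_star D c A a b \<le> ereal (mat_bullet D (outer x) + 2 * (c \<bullet> x))"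
    unfolding v_star_def by (rule INF_lower2) simp
  then show "v_star D c A a b \<le> ereal (x \<bullet> (D *v x) + 2 * (c \<bullet> x))"
    using mat_bullet_outer[OF assms(1)] by simp
qed

theorem theorem2:
  fixes D :: "real^'n^'n" and c :: "real^'n"
    and A :: "'m::finite \<Rightarrow> real^'n^'n" and a :: "'m \<Rightarrow> real^'n" and b :: "'m \<Rightarrow> real"
  assumes diagD: "diag_mat D"
    and diagA: "\<And>i. diag_mat (A i)"
    and A1_i: "feasP A a b \<noteq> {}"
    and A1_ii: "\<exists>y::'m \<Rightarrow> real. (\<forall>i. y i \<ge> 0) \<and> pd (\<Sum>i\<in>UNIV. y i *\<^sub>R A i)"
    and A1_iii: "feasS_has_interior A a b"
    and Sk_empty: "\<And>k. S_set D c A a k = {}"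
  shows "p_star D c A a b = v_star D c A a b \<and> v_star D c A a b = c_star D c A a b"
proof -
  obtain y where "\<And>i. 0 \<le> y i" and "pd (\<Sum>i\<in>UNIV. y i *\<^sub>R A i)"
    using A1_ii by blast
  then obtain xs zs where feasible: "(xs, zs) \<in> feasR A a b"
    and minimal: "\<And>x z. (x, z) \<in> feasR A a b \<Longrightarrow> lifted_quad D c xs zs \<le> lifted_quad D c x z"
    by (rule feasR_minimizer_exists[OF diagA A1_i]) blast
  obtain x0 z0 where "(x0, z0) \<in> feasR A a b" and "\<And>j. (x0 $ j)\<^sup>2 < z0 $ j"
    and "\<And>i x z. lifted_quad (A i) (a i) x0 z0 = b i \<Longrightarrow> lifted_quad (A i) (a i) x z = b i"
    by (rule feasR_slater_point[OF diagA A1_iii]) blast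
  then have tight: "zs = (\<chi> j. (xs $ j)\<^sup>2)"
    using feasR_minimizer_tight[OF Sk_empty _ _ _ feasible minimal] by blast
  have "xs \<in> feasP A a b"
    using feasible by (simp add: feasP_def mem_feasR_iff tight lifted_quad_squares[OF diagA])
  then have "c_star D c A a b \<le> ereal (lifted_quad D c xs zs)"
    unfolding c_star_def tight lifted_quad_squares[OF diagD] by (rule INF_lower)
  also have "ereal (lifted_quad D c xs zs) \<le> p_star D c A a b"
    unfolding p_star_eq_lifted_quad using minimal by (auto intro: INF_greatest)
  finally have cp: "c_star D c A a b \<le> p_star D c A a b" .
  note pv = p_star_le_v_star[OF diagD diagA] and vc = v_star_le_c_star[OF diagD diagA]
  show ?thesis
    using antisym[OF pv order_trans[OF vc cp]] antisym[OF vc order_trans[OF cp pv]] by blast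
qed

end
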